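(* Let $A,B\in\mathfrak{J}_n$ be nonempty with $B\subset A$, let $x^*\in\mathbb{R}$, and suppose $\mu(\Omega_{A,B,x^*})=0$. Then the function $h(x)=\mu\big(xA\,\widetilde\oplus\,(1-x)B\big)$, $x\in\mathbb{R}$, is continuous at $x^*$.
   Context: $\mu$ is $n$-dimensional Lebesgue measure. $\operatorname{ci}(A)$ is the closure of the interior of $A$. $\mathfrak{J}_n$ is the family of bounded sets $A\subset\mathbb{R}^n$ with $A=\operatorname{ci}(A)$ and $\mu(\partial A)=0$. For nonempty bounded $A$, $d_S(p,A)=d(p,\partial A)$ if $p\in A$ and $d_S(p,A)=-d(p,\partial A)$ if $p\notin A$, with $d(q,E)=\min_{e\in E}\|q-e\|$. For nonempty $A,B\in\mathfrak{J}_n$, $x\in\mathbb{R}$: $f_{A,B,x}(p)=x\,d_S(p,A)+(1-x)\,d_S(p,B)$, the distance average is $xA\,\widetilde\oplus\,(1-x)B=\{p: f_{A,B,x}(p)\ge0\}$, and $\Omega_{A,B,x}=\{p: f_{A,B,x}(p)=0\}$. *)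

theory Defs
  imports "HOL-Analysis.Analysis"
begin

definition J_class :: "'a::euclidean_space set set" where
  "J_class = {A. bounded A \<and> closure (interior A) = A \<and> frontier A \<in> null_sets lebesgue}"

definition signed_dist :: "'a::euclidean_space \<Rightarrow> 'a set \<Rightarrow> real" where
  "signed_dist p A = (if p \<in> A then infdist p (frontier A) else - infdist p (frontier A))"

definition f_avg :: "'a::euclidean_space set \<Rightarrow> 'a set \<Rightarrow> real \<Rightarrow> 'a \<Rightarrow> real" where
  "f_avg A B x p = x * signed_dist p A + (1 - x) * signed_dist p B"

definition dist_avg :: "'a::euclidean_space set \<Rightarrow> 'a set \<Rightarrow> real \<Rightarrow> 'a set" where
  "dist_avg A B x = {p. f_avg A B x p \<ge> 0}"

definition Omega_set :: "'a::euclidean_space set \<Rightarrow> 'a set \<Rightarrow> real \<Rightarrow> 'a set" where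
  "Omega_set A B x = {p. f_avg A B x p = 0}"

end

theory Submission
  imports Defs
begin

(* The proof is an application of dominated convergence to indicator functions.
   First, for any family F x of measurable functions depending continuously on x
   (pointwise in p), the measure of the superlevel set {p. F x p \<ge> 0} is continuous
   at x0 provided these sets stay inside a fixed set of finite measure for x near x0
   and the zero set {p. F x0 p = 0} is null: off the zero set the indicator of
   {F x p \<ge> 0} is eventually constant as x \<rightarrow> x0 (lemma isCont_measure_superlevel).
   Second, for closed bounded nonempty A, B the signed distances are Borel
   measurable, and the distance average is uniformly bounded for bounded
   parameters because f_{A,B,x} is negative far away (lemma dist_avg_subset_cball).
   The main theorem combines the two; it needs only closedness and boundedness
   of A and B. *)

lemma indicator_superlevel_tendsto:
  fixes g :: "nat \<Rightarrow> real" and l :: real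
  assumes "g \<longlonglongrightarrow> l" and "l \<noteq> 0"
  shows "(\<lambda>n. indicator {t. t \<ge> 0} (g n) :: real) \<longlonglongrightarrow> indicator {t. t \<ge> 0} l"
proof -
  have "eventually (\<lambda>n. (g n \<ge> 0) = (l \<ge> 0)) sequentially"
  proof (cases "l > 0")
    case True
    show ?thesis using order_tendstoD(1)[OF assms(1) True]
      by eventually_elim (use True in auto)
  next
    case False
    then have "l < 0" using assms(2) by linarith
    show ?thesis using order_tendstoD(2)[OF assms(1) \<open>l < 0\<close>]
      by eventually_elim (use \<open>l < 0\<close> in auto)
  qed
  then have "eventually (\<lambda>n. indicator {t. t \<ge> 0} (g n) = (indicator {t. t \<ge> 0} l :: real)) sequentially"
    by eventually_elim (simp add: indicator_def)
  then show ?thesis by (rule tendsto_eventually)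
qed

lemma isCont_measure_superlevel:
  fixes F :: "real \<Rightarrow> 'a::euclidean_space \<Rightarrow> real" and K :: "'a set"
  assumes meas: "\<And>x. F x \<in> borel_measurable lebesgue"
    and cont: "\<And>p. isCont (\<lambda>x. F x p) x0"
    and bound: "\<And>x. dist x x0 < d \<Longrightarrow> {p. F x p \<ge> 0} \<subseteq> K"
    and d: "d > 0" and K: "K \<in> lmeasurable"
    and null: "{p. F x0 p = 0} \<in> null_sets lebesgue"
  shows "isCont (\<lambda>x. measure lebesgue {p. F x p \<ge> 0}) x0"
proof (rule continuous_at_sequentiallyI)
  have sets: "{p. F x p \<ge> 0} \<in> sets lebesgue" for x
  proof -
    have "{p. F x p \<ge> 0} = F x -` {0..} \<inter> space lebesgue" by auto
    then show ?thesis using measurable_sets[OF meas[of x], of "{0..}"] by simp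
  qed
  define ind where "ind x = (indicator {p. F x p \<ge> 0} :: 'a \<Rightarrow> real)" for x
  have ind_meas: "ind x \<in> borel_measurable lebesgue" for x
    unfolding ind_def using sets[of x] by simp
  have measure_ind: "measure lebesgue {p. F x p \<ge> 0} = integral\<^sup>L lebesgue (ind x)" for x
    unfolding ind_def using sets[of x] by simp
  fix u :: "nat \<Rightarrow> real" assume u: "u \<longlonglongrightarrow> x0"
  obtain N where N: "\<And>n. n \<ge> N \<Longrightarrow> dist (u n) x0 < d"
    using tendstoD[OF u d] unfolding eventually_sequentially by blast
  have u': "(\<lambda>n. u (n + N)) \<longlonglongrightarrow> x0" using u by (rule LIMSEQ_ignore_initial_segment)
  have "(\<lambda>n. integral\<^sup>L lebesgue (ind (u (n + N)))) \<longlonglongrightarrow> integral\<^sup>L lebesgue (ind x0)"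
  proof (rule integral_dominated_convergence[where w="indicator K"])
    show "integrable lebesgue (indicator K :: 'a \<Rightarrow> real)"
      using K lmeasurable_iff_integrable by blast
    show "AE p in lebesgue. norm (ind (u (n + N)) p) \<le> indicator K p" for n
      using bound[OF N[of "n + N"]] by (intro AE_I2) (auto simp: ind_def indicator_def)
    show "AE p in lebesgue. (\<lambda>n. ind (u (n + N)) p) \<longlonglongrightarrow> ind x0 p"
    proof (rule AE_I'[OF null], safe)
      fix p assume "\<not> (\<lambda>n. ind (u (n + N)) p) \<longlonglongrightarrow> ind x0 p"
      moreover have "(\<lambda>n. F (u (n + N)) p) \<longlonglongrightarrow> F x0 p"
        using cont[of p] u' by (rule isCont_tendsto_compose)
      ultimately show "F x0 p = 0"
        using indicator_superlevel_tendsto[of "\<lambda>n. F (u (n + N)) p" "F x0 p"]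
        by (auto simp: ind_def indicator_def)
    qed
  qed (use ind_meas in auto)
  then have "(\<lambda>n. measure lebesgue {p. F (u (n + N)) p \<ge> 0}) \<longlonglongrightarrow> measure lebesgue {p. F x0 p \<ge> 0}"
    by (simp add: measure_ind)
  then show "(\<lambda>n. measure lebesgue {p. F (u n) p \<ge> 0}) \<longlonglongrightarrow> measure lebesgue {p. F x0 p \<ge> 0}"
    by (rule LIMSEQ_offset)
qed

text \<open>The signed distance to a closed set is Lebesgue measurable (it is continuous on
  \<open>A\<close> and on its complement).\<close>
lemma signed_dist_measurable:
  fixes A :: "'a::euclidean_space set"
  assumes "closed A"
  shows "(\<lambda>p. signed_dist p A) \<in> borel_measurable lebesgue"
proof -
  have "(\<lambda>p. signed_dist p A) \<in> borel_measurable borel"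
    unfolding signed_dist_def using assms
    by (intro measurable_If_set) (auto intro!: borel_measurable_continuous_onI continuous_intros)
  then show ?thesis
    by (intro measurable_completion) (simp add: measurable_lborel2)
qed

lemma f_avg_measurable:
  assumes "closed A" and "closed B"
  shows "f_avg A B x \<in> borel_measurable lebesgue"
  unfolding f_avg_def[abs_def]
  using signed_dist_measurable[OF assms(1)] signed_dist_measurable[OF assms(2)] by measurable

lemma infdist_norm_bounds:
  fixes S :: "'a::euclidean_space set"
  assumes "S \<noteq> {}" and "S \<subseteq> cball 0 R"
  shows "norm p - R \<le> infdist p S" and "infdist p S \<le> norm p + R"
proof -
  have "norm p - R \<le> dist p s" if "s \<in> S" for s
    using assms(2) that norm_triangle_sub[of p s] by (auto simp: dist_norm norm_minus_commute)
  then show "norm p - R \<le> infdist p S"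
    unfolding infdist_notempty[OF assms(1)] using assms(1) by (intro cINF_greatest) auto
  obtain s where s: "s \<in> S" using assms(1) by auto
  then have "dist p s \<le> norm p + R"
    using assms(2) norm_triangle_ineq4[of p s] by (auto simp: dist_norm)
  then show "infdist p S \<le> norm p + R" using infdist_le[OF s, of p] by linarith
qed

text \<open>Outside \<open>A \<union> B \<subseteq> cball 0 R\<close> both signed distances are close to \<open>-\<parallel>p\<parallel>\<close>, so for
  \<open>\<bar>x\<bar> \<le> M\<close> the averaging function is negative once \<open>\<parallel>p\<parallel> > R + 2MR\<close>.\<close>
lemma f_avg_neg_far:
  fixes A B :: "'a::euclidean_space set"
  assumes "closed A" "closed B" "A \<noteq> {}" "B \<noteq> {}" "A \<union> B \<subseteq> cball 0 R"
    and "\<bar>x\<bar> \<le> M" and "norm p > R + 2 * M * R"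
  shows "f_avg A B x p < 0"
proof -
  have bnd: "bounded A" "bounded B" using assms(5) bounded_cball bounded_subset by blast+
  have fr: "frontier A \<noteq> {}" "frontier B \<noteq> {}"
    using frontier_not_empty assms(3,4) bnd not_bounded_UNIV by metis+
  have frR: "frontier A \<subseteq> cball 0 R" "frontier B \<subseteq> cball 0 R"
    using frontier_subset_closed[OF assms(1)] frontier_subset_closed[OF assms(2)] assms(5) by auto
  have R: "R \<ge> 0" using assms(3,5) by auto
  then have "2 * M * R \<ge> 0" using assms(6) by simp
  then have out: "p \<notin> A" "p \<notin> B" using assms(5,7) by auto
  define a where "a = infdist p (frontier A)"
  define b where "b = infdist p (frontier B)"
  have f: "f_avg A B x p = - (b + x * (a - b))"
    using out by (simp add: f_avg_def signed_dist_def a_def b_def algebra_simps)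
  have "\<bar>a - b\<bar> \<le> 2 * R" and b: "norm p - R \<le> b"
    using infdist_norm_bounds[OF fr(1) frR(1), of p] infdist_norm_bounds[OF fr(2) frR(2), of p]
    unfolding a_def b_def by linarith+
  then have "\<bar>x * (a - b)\<bar> \<le> M * (2 * R)"
    unfolding abs_mult using assms(6) by (intro mult_mono) auto
  then show ?thesis using f b assms(7) by linarith
qed

lemma dist_avg_subset_cball:
  fixes A B :: "'a::euclidean_space set"
  assumes "closed A" "closed B" "A \<noteq> {}" "B \<noteq> {}" "A \<union> B \<subseteq> cball 0 R" "\<bar>x\<bar> \<le> M"
  shows "dist_avg A B x \<subseteq> cball 0 (R + 2 * M * R)"
proof
  fix p assume "p \<in> dist_avg A B x"
  then have "\<not> f_avg A B x p < 0" by (simp add: dist_avg_def)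
  then have "\<not> norm p > R + 2 * M * R" using f_avg_neg_far[OF assms, of p] by blast
  then show "p \<in> cball 0 (R + 2 * M * R)" by simp
qed

theorem mainTheorem4:
  fixes A B :: "'a::euclidean_space set" and xs :: real
  assumes "A \<in> J_class" and "B \<in> J_class"
    and "A \<noteq> {}" and "B \<noteq> {}"
    and "B \<subseteq> A"
    and "Omega_set A B xs \<in> null_sets lebesgue"
  shows "isCont (\<lambda>x. measure lebesgue (dist_avg A B x)) xs"
proof -
  have A: "bounded A" "closure (interior A) = A" and B: "bounded B" "closure (interior B) = B"
    using assms(1,2) by (simp_all add: J_class_def)
  then have closed: "closed A" "closed B" by (metis closed_closure)+
  from A(1) B(1) have "bounded (A \<union> B)" by simp
  then obtain R where "\<forall>p \<in> A \<union> B. norm p \<le> R" unfolding bounded_iff by blast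
  then have R: "A \<union> B \<subseteq> cball 0 R" by auto
  have local_bound: "dist_avg A B x \<subseteq> cball 0 (R + 2 * (\<bar>xs\<bar> + 1) * R)" if "dist x xs < 1" for x
    using that by (intro dist_avg_subset_cball[OF closed assms(3,4) R]) (simp add: dist_real_def)
  have "isCont (\<lambda>x. measure lebesgue {p. f_avg A B x p \<ge> 0}) xs"
  proof (rule isCont_measure_superlevel)
    show "f_avg A B x \<in> borel_measurable lebesgue" for x
      using f_avg_measurable[OF closed] .
    show "isCont (\<lambda>x. f_avg A B x p) xs" for p
      unfolding f_avg_def by (intro continuous_intros)
    show "{p. f_avg A B x p \<ge> 0} \<subseteq> cball 0 (R + 2 * (\<bar>xs\<bar> + 1) * R)" if "dist x xs < 1" for x
      using local_bound[OF that] by (simp add: dist_avg_def)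
    show "{p. f_avg A B xs p = 0} \<in> null_sets lebesgue"
      using assms(6) by (simp add: Omega_set_def)
  qed auto
  then show ?thesis by (simp add: dist_avg_def)
qed

end
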